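(* Let $k\in\mathbb N$, $b\geqslant2$, let $\mathbb P$ be a probability measure on $\{0,1,\dots,b-1\}^k$, and let $\mu=\mu_{b,\mathbb P}$. For every $L\in\mathbb N$, \[ \dim_{\ell^1}(\mu)\geqslant\frac{-\log\Big(\displaystyle\sup_{\mathbf x\in\mathbb R^k}b^{-kL}\sum_{i_1,\dots,i_k=0}^{b^L-1}S_L\Big(\mathbf x+\frac{\mathbf i}{b^L}\Big)\Big)}{\log(b^L)}, \] where $\mathbf i=(i_1,\dots,i_k)$.
   Context: The missing-digit measure $\mu_{b,\mathbb P}$ is the distribution of the random variable $\sum_{j=1}^\infty\mathbf d^{(j)}/b^j$, where the $\mathbf d^{(j)}\in\{0,\dots,b-1\}^k$ are i.i.d. with distribution $\mathbb P$. For $\mathbf x\in\mathbb R^k$ define \[ g(\mathbf x)=\Big|\sum_{\mathbf d\in\{0,\dots,b-1\}^k}\mathbb P(\mathbf d)\,e^{2\pi i\,\mathbf d\cdot\mathbf x}\Big|,\qquad S_L(\mathbf x)=\prod_{j=0}^{L-1}g(b^j\mathbf x). \] For a Borel probability measure $\nu$ on $[0,1]^k$, $\hat\nu({\boldsymbol{\xi}})=\int e^{-2\pi i{\boldsymbol{\xi}}\cdot\mathbf x}\,d\nu(\mathbf x)$ and $\dim_{\ell^1}(\nu)=\sup\{s\geqslant0:\sum_{{\boldsymbol{\xi}}\in\mathbb Z^k,\|{\boldsymbol{\xi}}\|_\infty\leqslant Q}|\hat\nu({\boldsymbol{\xi}})|\ll Q^{k-s}\ (Q\geqslant1)\}$.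 *)

theory Defs
  imports "HOL-Probability.Probability"
begin

definition digits :: "nat \<Rightarrow> (nat^'n::finite) set" where
  "digits b = {d. \<forall>i. d$i < b}"

text \<open>The missing-digit measure: law of sum_{j>=1} d^(j) / b^j with d^(j) i.i.d. ~ P.
  The i.i.d. sequence is realised on the infinite product space (index j = 0,1,2,...
  corresponds to the paper's j = 1,2,3,...).\<close>
definition missing_digit_measure :: "nat \<Rightarrow> (nat^'n::finite) pmf \<Rightarrow> (real^'n) measure" where
  "missing_digit_measure b P =
     distr (Pi\<^sub>M (UNIV::nat set) (\<lambda>_. measure_pmf P)) borel
       (\<lambda>\<omega>. \<chi> i. (\<Sum>j. real (\<omega> j $ i) / real b ^ Suc j))"

definition fourier_coeff :: "(real^'n::finite) measure \<Rightarrow> int^'n \<Rightarrow> complex" where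
  "fourier_coeff \<nu> \<xi> = (\<integral>x. cis (- 2 * pi * (\<Sum>i\<in>UNIV. of_int (\<xi>$i) * x$i)) \<partial>\<nu>)"

definition l1_dim :: "(real^'n::finite) measure \<Rightarrow> real" where
  "l1_dim \<nu> = Sup {s. s \<ge> 0 \<and> (\<exists>C. \<forall>Q::real. Q \<ge> 1 \<longrightarrow>
      (\<Sum>\<xi>\<in>{\<xi>::int^'n. \<forall>i. \<bar>of_int (\<xi>$i)\<bar> \<le> Q}. norm (fourier_coeff \<nu> \<xi>))
        \<le> C * Q powr (real CARD('n) - s))}"

definition g_fun :: "nat \<Rightarrow> (nat^'n::finite) pmf \<Rightarrow> real^'n \<Rightarrow> real" where
  "g_fun b P x = norm (\<Sum>d\<in>digits b.
      complex_of_real (pmf P d) * cis (2 * pi * (\<Sum>i\<in>UNIV. real (d$i) * x$i)))"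

definition S_fun :: "nat \<Rightarrow> (nat^'n::finite) pmf \<Rightarrow> nat \<Rightarrow> real^'n \<Rightarrow> real" where
  "S_fun b P L x = (\<Prod>j<L. g_fun b P ((real b ^ j) *\<^sub>R x))"

end

theory Submission
  imports Defs
begin

text \<open>
  Writing \<open>\<mu>\<close> as the law of \<open>X = d\<^sub>1/b + X'/b\<close> with \<open>X'\<close> an independent copy of \<open>X\<close>
  gives \<open>\<hat>\<mu>(t) = \<phi>(t/b) \<hat>\<mu>(t/b)\<close> with \<open>|\<phi>| = g\<close>, hence \<open>|\<hat>\<mu>(\<xi>)| \<le> S\<^sub>N(\<xi>/b\<^sup>N)\<close>.
  If \<open>\<parallel>\<xi>\<parallel>\<^sub>\<infinity> \<le> Q < b\<^sup>L\<^sup>M\<close>, reducing \<open>\<xi>\<close> modulo \<open>b\<^sup>L\<^sup>M\<close> (\<open>S\<^sub>N\<close> is \<open>\<int>\<^sup>k\<close>-periodic) bounds the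
  \<open>\<ell>\<^sup>1\<close>-sum over the box by \<open>2\<^sup>k\<close> times the sum of \<open>S\<^sub>L\<^sub>M\<close> over the grid \<open>b\<^sup>-\<^sup>L\<^sup>M \<int>\<^sup>k / \<int>\<^sup>k\<close>.
  Since \<open>S\<^sub>L\<^sub>+\<^sub>N(x) = S\<^sub>L(x) S\<^sub>N(b\<^sup>L x)\<close>, that grid sum is at most \<open>(b\<^sup>k\<^sup>L \<sigma>)\<^sup>M\<close>, where \<open>\<sigma>\<close> is
  the supremum in the statement, and \<open>(b\<^sup>k\<^sup>L \<sigma>)\<^sup>M \<approx> Q\<^sup>k\<^sup>-\<^sup>s\<close> with \<open>s = -log \<sigma> / log b\<^sup>L\<close>.
\<close>

section \<open>Digit vectors\<close>

lemma finite_vec_set: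
  assumes "finite A"
  shows "finite {v::'a^'n::finite. \<forall>i. v$i \<in> A}"
proof -
  have "{v::'a^'n. \<forall>i. v$i \<in> A} = vec_nth -` (PiE UNIV (\<lambda>_. A))"
    by (auto simp: PiE_iff)
  moreover have "inj vec_nth" by (auto simp: inj_def vec_eq_iff)
  ultimately show ?thesis using assms by (auto intro!: finite_vimageI finite_PiE)
qed

lemma card_vec_set:
  assumes "finite A"
  shows "card {v::'a^'n::finite. \<forall>i. v$i \<in> A} = card A ^ CARD('n)"
proof -
  have "{v::'a^'n. \<forall>i. v$i \<in> A} = vec_nth -` (PiE UNIV (\<lambda>_. A))"
    by (auto simp: PiE_iff)
  moreover have "inj vec_nth" by (auto simp: inj_def vec_eq_iff)
  moreover have "PiE UNIV (\<lambda>_. A) \<subseteq> range (vec_nth :: 'a^'n \<Rightarrow> _)"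
  proof
    fix f assume "f \<in> PiE (UNIV::'n set) (\<lambda>_. A)"
    have "f = vec_nth (vec_lambda f)" by (simp add: vec_lambda_inverse)
    then show "f \<in> range vec_nth" by blast
  qed
  ultimately have "card {v::'a^'n. \<forall>i. v$i \<in> A} = card (PiE (UNIV::'n set) (\<lambda>_. A))"
    by (metis card_vimage_inj)
  thus ?thesis using assms by (simp add: card_PiE)
qed

lemma finite_digits: "finite (digits b :: (nat^'n::finite) set)"
  unfolding digits_def using finite_vec_set[of "{..<b}"] by simp

lemma card_digits: "card (digits b :: (nat^'n::finite) set) = b ^ CARD('n)"
  unfolding digits_def using card_vec_set[of "{..<b}"] by simp

lemma zero_in_digits: "b > 0 \<Longrightarrow> 0 \<in> digits b"
  by (simp add: digits_def)

definition real_vec :: "nat^'n::finite \<Rightarrow> real^'n" where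
  "real_vec i = (\<chi> j. real (i$j))"

lemma sum_digits_mult:
  fixes f :: "nat^'n::finite \<Rightarrow> 'b::comm_monoid_add"
  assumes B: "B > 0"
  shows "(\<Sum>i\<in>digits (B * C). f i) = (\<Sum>a\<in>digits B. \<Sum>c\<in>digits C. f (\<chi> j. a$j + B * c$j))"
proof -
  let ?h = "\<lambda>(a::nat^'n, c::nat^'n). (\<chi> j. a$j + B * c$j)"
  let ?h' = "\<lambda>i::nat^'n. ((\<chi> j. i$j mod B), (\<chi> j. i$j div B))"
  have "bij_betw ?h (digits B \<times> digits C) (digits (B * C))"
  proof (rule bij_betw_byWitness[where f' = ?h'])
    show "\<forall>p\<in>digits B \<times> digits C. ?h' (?h p) = p"
      using B by (auto simp: digits_def vec_eq_iff)
    show "\<forall>i\<in>digits (B * C). ?h (?h' i) = i"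
      by (auto simp: digits_def vec_eq_iff)
    show "?h ` (digits B \<times> digits C) \<subseteq> digits (B * C)"
    proof (clarsimp simp: digits_def)
      fix a c :: "nat^'n" and j
      assume "\<forall>i. a$i < B" "\<forall>i. c$i < C"
      then have "a$j < B" "c$j < C" by auto
      then have "a$j + B * c$j < B * (c$j + 1)" and "c$j + 1 \<le> C" by simp_all
      then show "a$j + B * c$j < B * C"
        by (meson less_le_trans mult_le_mono2)
    qed
    show "?h' ` digits (B * C) \<subseteq> digits B \<times> digits C"
      using B by (auto simp: digits_def less_mult_imp_div_less mult.commute)
  qed
  then have "(\<Sum>i\<in>digits (B * C). f i) = (\<Sum>p\<in>digits B \<times> digits C. f (?h p))"
    by (simp add: sum.reindex_bij_betw)
  also have "\<dots> = (\<Sum>a\<in>digits B. \<Sum>c\<in>digits C. f (?h (a, c)))"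
    by (subst sum.cartesian_product) (auto intro!: sum.cong)
  finally show ?thesis by simp
qed

abbreviation int_box :: "real \<Rightarrow> (int^'n::finite) set" where
  "int_box Q \<equiv> {\<xi>. \<forall>i. \<bar>of_int (\<xi>$i)\<bar> \<le> Q}"

lemma finite_int_box: "finite (int_box Q :: (int^'n::finite) set)"
proof (rule finite_subset)
  show "int_box Q \<subseteq> {v::int^'n. \<forall>i. v$i \<in> {-\<lceil>Q\<rceil>..\<lceil>Q\<rceil>}}"
  proof safe
    fix \<xi> :: "int^'n" and i assume "\<forall>i. \<bar>real_of_int (\<xi>$i)\<bar> \<le> Q"
    then have "\<bar>real_of_int (\<xi>$i)\<bar> \<le> Q" by simp
    then have "\<xi>$i \<le> \<lceil>Q\<rceil>" "- \<lceil>Q\<rceil> \<le> \<xi>$i" by linarith+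
    then show "\<xi>$i \<in> {-\<lceil>Q\<rceil>..\<lceil>Q\<rceil>}" by simp
  qed
qed (rule finite_vec_set, simp)

lemma int_div_in_minus_one_zero:
  fixes x D :: int
  assumes "D > 0" "- D < x" "x < D"
  shows "x div D \<in> {-1, 0}"
proof -
  have "x = D * (x div D) + x mod D" and "0 \<le> x mod D" "x mod D < D"
    using assms(1) by simp_all
  then have "D * (-2) < D * (x div D)" and "D * (x div D) < D * 1"
    using assms by linarith+
  then have "-2 < x div D" and "x div D < 1"
    using assms(1) mult_less_cancel_left_pos by blast+
  then show ?thesis by auto
qed

text \<open>
  The map \<open>\<xi> \<mapsto> (\<xi> mod D, \<xi> div D)\<close> is injective, and on a set with coordinates in
  \<open>(-D, D)\<close> the quotient has coordinates in \<open>{-1, 0}\<close>: so each residue is hit at most \<open>2\<^sup>k\<close> times.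
\<close>

lemma sum_mod_le_two_power_sum_digits:
  fixes F :: "nat^'n::finite \<Rightarrow> real" and B :: "(int^'n) set"
  assumes D: "D > 0" and F: "\<And>a. F a \<ge> 0"
    and B: "\<And>\<xi> j. \<xi> \<in> B \<Longrightarrow> - int D < \<xi>$j \<and> \<xi>$j < int D"
  shows "(\<Sum>\<xi>\<in>B. F (\<chi> j. nat (\<xi>$j mod int D))) \<le> 2 ^ CARD('n) * (\<Sum>a\<in>digits D. F a)"
proof -
  let ?phi = "\<lambda>\<xi>::int^'n. ((\<chi> j. nat (\<xi>$j mod int D)) :: nat^'n, (\<chi> j. \<xi>$j div int D) :: int^'n)"
  define Quots where "Quots = {q::int^'n. \<forall>j. q$j \<in> {-1, 0}}"
  have finite_Quots: "finite Quots" unfolding Quots_def by (rule finite_vec_set) simp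
  have card_Quots: "card Quots = 2 ^ CARD('n)"
    unfolding Quots_def by (subst card_vec_set) (auto simp: numeral_2_eq_2)
  have inj: "inj_on ?phi B"
  proof (rule inj_onI)
    fix x y assume "?phi x = ?phi y"
    then have "x$j mod int D = y$j mod int D \<and> x$j div int D = y$j div int D" for j
      using D by (auto simp: vec_eq_iff eq_nat_nat_iff)
    then show "x = y" by (metis vec_eq_iff div_mult_mod_eq)
  qed
  have image: "?phi ` B \<subseteq> digits D \<times> Quots"
  proof
    fix p assume "p \<in> ?phi ` B"
    then obtain \<xi> where \<xi>: "\<xi> \<in> B" "p = ?phi \<xi>" by blast
    have "\<xi>$j div int D \<in> {-1, 0}" for j
      using B[OF \<xi>(1), of j] D by (intro int_div_in_minus_one_zero) auto
    then have "(\<chi> j. \<xi>$j div int D) \<in> Quots" by (simp add: Quots_def)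
    moreover have "(\<chi> j. nat (\<xi>$j mod int D)) \<in> digits D"
      using D by (simp add: digits_def nat_less_iff)
    ultimately show "p \<in> digits D \<times> Quots" using \<xi>(2) by simp
  qed
  have "(\<Sum>\<xi>\<in>B. F (fst (?phi \<xi>))) = (\<Sum>p\<in>?phi ` B. F (fst p))"
    by (simp add: sum.reindex[OF inj])
  also have "\<dots> \<le> (\<Sum>p\<in>digits D \<times> Quots. F (fst p))"
    by (rule sum_mono2) (use image in \<open>auto simp: finite_digits finite_Quots F\<close>)
  also have "\<dots> = (\<Sum>a\<in>digits D. \<Sum>q\<in>Quots. F a)"
    by (subst sum.cartesian_product) (auto intro!: sum.cong)
  also have "\<dots> = 2 ^ CARD('n) * (\<Sum>a\<in>digits D. F a)"
    by (simp add: card_Quots sum_distrib_left)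
  finally show ?thesis by simp
qed

section \<open>The functions \<open>g\<close> and \<open>S\<^sub>L\<close>\<close>

lemma g_fun_nonneg: "g_fun b P x \<ge> 0"
  by (simp add: g_fun_def)

lemma g_fun_le_one:
  assumes "set_pmf P \<subseteq> digits b"
  shows "g_fun b P x \<le> 1"
proof -
  have "g_fun b P x \<le> (\<Sum>d\<in>digits b. norm (of_real (pmf P d) * cis (2 * pi * (\<Sum>i\<in>UNIV. real (d$i) * x$i))))"
    unfolding g_fun_def by (rule norm_sum)
  also have "\<dots> = (\<Sum>d\<in>digits b. pmf P d)" by (simp add: norm_mult)
  also have "\<dots> = 1" by (rule sum_pmf_eq_1[OF finite_digits assms])
  finally show ?thesis .
qed

lemma g_fun_zero:
  assumes "set_pmf P \<subseteq> digits b"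
  shows "g_fun b P 0 = 1"
  using sum_pmf_eq_1[OF finite_digits assms] by (simp add: g_fun_def flip: of_real_sum)

lemma g_fun_eq_norm_conj:
  "g_fun b P x = norm (\<Sum>d\<in>digits b. of_real (pmf P d) * cis (- 2 * pi * (real_vec d \<bullet> x)))"
proof -
  have conj: "(\<Sum>d\<in>digits b. of_real (pmf P d) * cis (- 2 * pi * (real_vec d \<bullet> x)))
     = cnj (\<Sum>d\<in>digits b. of_real (pmf P d) * cis (2 * pi * (\<Sum>i\<in>UNIV. real (d$i) * x$i)))"
    by (simp add: cis_cnj real_vec_def inner_vec_def)
  show ?thesis unfolding g_fun_def conj by (rule complex_mod_cnj[symmetric])
qed

lemma g_fun_periodic:
  assumes "\<forall>i. v$i \<in> \<int>"
  shows "g_fun b P (x + v) = g_fun b P x"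
proof -
  have "cis (2 * pi * (\<Sum>i\<in>UNIV. real (d$i) * (x + v)$i)) = cis (2 * pi * (\<Sum>i\<in>UNIV. real (d$i) * x$i))"
    for d :: "nat^'a"
  proof -
    have "(\<Sum>i\<in>UNIV. real (d$i) * v$i) \<in> \<int>"
      using assms by (intro Ints_sum Ints_mult) auto
    moreover have "cis (2 * pi * (\<Sum>i\<in>UNIV. real (d$i) * (x + v)$i))
        = cis (2 * pi * (\<Sum>i\<in>UNIV. real (d$i) * x$i)) * cis (2 * pi * (\<Sum>i\<in>UNIV. real (d$i) * v$i))"
      by (simp add: cis_mult distrib_left sum.distrib)
    ultimately show ?thesis by simp
  qed
  then show ?thesis by (simp add: g_fun_def)
qed

lemma S_fun_nonneg: "S_fun b P N x \<ge> 0"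
  by (simp add: S_fun_def prod_nonneg g_fun_nonneg)

lemma S_fun_le_one: "set_pmf P \<subseteq> digits b \<Longrightarrow> S_fun b P N x \<le> 1"
  unfolding S_fun_def by (rule prod_le_1) (auto simp: g_fun_nonneg g_fun_le_one)

lemma S_fun_zero: "set_pmf P \<subseteq> digits b \<Longrightarrow> S_fun b P N 0 = 1"
  by (simp add: S_fun_def g_fun_zero)

lemma S_fun_periodic:
  assumes "\<forall>i. v$i \<in> \<int>"
  shows "S_fun b P N (x + v) = S_fun b P N x"
proof -
  have "g_fun b P (real b ^ j *\<^sub>R x + real b ^ j *\<^sub>R v) = g_fun b P (real b ^ j *\<^sub>R x)" for j
    using assms by (intro g_fun_periodic) auto
  then show ?thesis by (simp add: S_fun_def scaleR_add_right)
qed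

lemma prod_lessThan_add:
  "(\<Prod>j<L + (N::nat). f j) = (\<Prod>j<L. f j) * (\<Prod>j<N. f (L + j) :: 'a::comm_monoid_mult)"
  by (induction N) (simp_all add: mult.assoc)

lemma S_fun_add: "S_fun b P (L + N) x = S_fun b P L x * S_fun b P N (real b ^ L *\<^sub>R x)"
  unfolding S_fun_def prod_lessThan_add by (simp add: power_add mult.commute)

section \<open>Fourier transform of the missing-digit measure\<close>

definition fourier_transform :: "(real^'n::finite) measure \<Rightarrow> real^'n \<Rightarrow> complex" where
  "fourier_transform \<nu> t = (\<integral>x. cis (- 2 * pi * (t \<bullet> x)) \<partial>\<nu>)"

lemma fourier_coeff_eq_fourier_transform:
  "fourier_coeff \<nu> \<xi> = fourier_transform \<nu> (\<chi> i. of_int (\<xi>$i))"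
  by (simp add: fourier_coeff_def fourier_transform_def inner_vec_def)

lemma norm_fourier_transform_le_one:
  assumes "prob_space \<nu>"
  shows "norm (fourier_transform \<nu> t) \<le> 1"
proof -
  interpret prob_space \<nu> by fact
  have "norm (fourier_transform \<nu> t) \<le> (\<integral>x. norm (cis (- 2 * pi * (t \<bullet> x))) \<partial>\<nu>)"
    unfolding fourier_transform_def by (rule integral_norm_bound)
  also have "\<dots> = 1" by (simp add: prob_space)
  finally show ?thesis .
qed

lemma fourier_transform_zero: "prob_space \<nu> \<Longrightarrow> fourier_transform \<nu> 0 = 1"
  by (simp add: fourier_transform_def prob_space.prob_space)

definition digit_expansion :: "nat \<Rightarrow> (nat \<Rightarrow> nat^'n::finite) \<Rightarrow> real^'n" where
  "digit_expansion b \<omega> = (\<chi> i. \<Sum>j. real (\<omega> j $ i) / real b ^ Suc j)"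

abbreviation digit_space :: "(nat^'n::finite) pmf \<Rightarrow> (nat \<Rightarrow> nat^'n) measure" where
  "digit_space P \<equiv> Pi\<^sub>M UNIV (\<lambda>_. measure_pmf P)"

lemma prob_space_digit_space: "prob_space (digit_space P)"
  by (intro prob_space_PiM prob_space_measure_pmf)

lemma borel_measurable_vec_lambda:
  assumes "\<And>i. (\<lambda>x. f x i) \<in> borel_measurable M"
  shows "(\<lambda>x. (\<chi> i. f x i) :: real^'n::finite) \<in> borel_measurable M"
proof -
  have "(\<lambda>x. (\<chi> i. f x i) :: real^'n) = (\<lambda>x. \<Sum>i\<in>UNIV. f x i *\<^sub>R axis i 1)"
    by (rule ext) (simp add: vec_eq_iff sum_component axis_def if_distrib cong: if_cong)
  also have "\<dots> \<in> borel_measurable M" using assms by measurable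
  finally show ?thesis .
qed

lemma digit_expansion_measurable: "digit_expansion b \<in> borel_measurable (digit_space P)"
  unfolding digit_expansion_def by (rule borel_measurable_vec_lambda) measurable

lemma missing_digit_measure_eq_distr:
  "missing_digit_measure b P = distr (digit_space P) borel (digit_expansion b)"
  by (simp add: missing_digit_measure_def digit_expansion_def[abs_def])

lemma prob_space_missing_digit_measure: "prob_space (missing_digit_measure b P)"
  unfolding missing_digit_measure_eq_distr
  by (intro prob_space.prob_space_distr prob_space_digit_space digit_expansion_measurable)

lemma fourier_transform_missing_digit_measure:
  "fourier_transform (missing_digit_measure b P) t =
     (\<integral>\<omega>. cis (- 2 * pi * (t \<bullet> digit_expansion b \<omega>)) \<partial>digit_space P)"
  unfolding missing_digit_measure_eq_distr fourier_transform_def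
  by (rule integral_distr[OF digit_expansion_measurable]) (intro borel_measurable_continuous_onI continuous_intros)

lemma summable_digit_series:
  assumes b: "b \<ge> 2" and \<omega>: "\<And>j. \<omega> j \<in> digits b"
  shows "summable (\<lambda>j. real (\<omega> j $ i) / real b ^ Suc j)"
proof (rule summable_comparison_test[of _ "\<lambda>j. (1 / real b) ^ j"])
  have "real (\<omega> n $ i) / real b ^ Suc n \<le> real b / real b ^ Suc n" for n
    using \<omega>[of n] by (intro divide_right_mono) (auto simp: digits_def less_imp_le)
  then show "\<exists>N. \<forall>n\<ge>N. norm (real (\<omega> n $ i) / real b ^ Suc n) \<le> (1 / real b) ^ n"
    using b by (simp add: power_divide)
  show "summable (\<lambda>j. (1 / real b) ^ j)" using b by (intro summable_geometric) auto
qed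

lemma digit_expansion_case_nat:
  assumes b: "b \<ge> 2" and s: "s \<in> digits b" and \<omega>: "\<And>j. \<omega> j \<in> digits b"
  shows "digit_expansion b (case_nat s \<omega>) = (1 / real b) *\<^sub>R (real_vec s + digit_expansion b \<omega>)"
proof -
  have "digit_expansion b (case_nat s \<omega>) $ i = (1 / real b) * (real (s$i) + digit_expansion b \<omega> $ i)" for i
  proof -
    let ?f = "\<lambda>j. real (case_nat s \<omega> j $ i) / real b ^ Suc j"
    have "summable ?f"
      by (rule summable_digit_series[OF b]) (use \<omega> s in \<open>auto split: nat.split\<close>)
    then have "(\<Sum>n. ?f (Suc n)) = suminf ?f - ?f 0"
      by (rule suminf_split_head)
    then have "suminf ?f = ?f 0 + (\<Sum>n. ?f (Suc n))"
      by linarith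
    also have "(\<Sum>n. ?f (Suc n)) = (\<Sum>n. real (\<omega> n $ i) / real b ^ Suc n) / real b"
      using summable_digit_series[OF b \<omega>]
      by (simp add: suminf_divide[symmetric] divide_divide_eq_left mult.commute)
    also have "\<dots> = digit_expansion b \<omega> $ i / real b"
      by (simp add: digit_expansion_def)
    finally show ?thesis by (simp add: digit_expansion_def add_divide_distrib)
  qed
  then show ?thesis by (simp add: vec_eq_iff real_vec_def)
qed

text \<open>The first digit is independent of the remaining ones, which again form a \<open>digit_space P\<close> sequence.\<close>

lemma integral_digit_space_case_nat:
  fixes f :: "(nat \<Rightarrow> nat^'n::finite) \<Rightarrow> 'b::{banach, second_countable_topology}"
  assumes f: "f \<in> borel_measurable (digit_space P)" and bounded: "\<And>\<omega>. norm (f \<omega>) \<le> B"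
  shows "(\<integral>\<omega>. f \<omega> \<partial>digit_space P) = (\<integral>s. \<integral>\<omega>. f (case_nat s \<omega>) \<partial>digit_space P \<partial>measure_pmf P)"
proof -
  interpret sequence_space "measure_pmf P"
    unfolding sequence_space_def product_prob_space_def product_prob_space_axioms_def
      product_sigma_finite_def
    by (auto intro: prob_space_measure_pmf prob_space_imp_sigma_finite)
  let ?M = "measure_pmf P"
  let ?S = "digit_space P"
  interpret PS: pair_sigma_finite ?M ?S
    unfolding pair_sigma_finite_def
    by (auto intro: prob_space_imp_sigma_finite prob_space_measure_pmf prob_space_digit_space)
  interpret PP: prob_space "?M \<Otimes>\<^sub>M ?S"
    by (intro prob_space_pair prob_space_measure_pmf prob_space_digit_space)
  have cons_measurable: "(\<lambda>(s, \<omega>). case_nat s \<omega>) \<in> measurable (?M \<Otimes>\<^sub>M ?S) ?S"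
    by measurable
  have "(\<integral>\<omega>. f \<omega> \<partial>?S) = integral\<^sup>L (distr (?M \<Otimes>\<^sub>M ?S) ?S (\<lambda>(s, \<omega>). case_nat s \<omega>)) f"
    by (simp add: PiM_iter)
  also have "\<dots> = (\<integral>x. f (case_prod case_nat x) \<partial>(?M \<Otimes>\<^sub>M ?S))"
    by (rule integral_distr[OF cons_measurable f])
  also have "integrable (?M \<Otimes>\<^sub>M ?S) (\<lambda>x. f (case_prod case_nat x))"
    by (rule PP.integrable_const_bound[where B=B, OF _ measurable_compose[OF cons_measurable f]])
      (simp add: bounded)
  from PS.integral_fst'[OF this] have "(\<integral>x. f (case_prod case_nat x) \<partial>(?M \<Otimes>\<^sub>M ?S))
      = (\<integral>s. \<integral>\<omega>. f (case_nat s \<omega>) \<partial>?S \<partial>?M)"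
    by simp
  finally show ?thesis .
qed

lemma fourier_transform_missing_digit_measure_self_similar:
  fixes P :: "(nat^'n::finite) pmf" and t :: "real^'n"
  assumes b: "b \<ge> 2" and sub: "set_pmf P \<subseteq> digits b"
  defines "\<mu> \<equiv> missing_digit_measure b P" and "u \<equiv> (1 / real b) *\<^sub>R t"
  shows "fourier_transform \<mu> t =
    (\<Sum>d\<in>digits b. of_real (pmf P d) * cis (- 2 * pi * (real_vec d \<bullet> u))) * fourier_transform \<mu> u"
proof -
  let ?M = "measure_pmf P"
  let ?S = "digit_space P"
  let ?F = "\<lambda>t \<omega>. cis (- 2 * pi * (t \<bullet> digit_expansion b \<omega>))"
  let ?c = "\<lambda>s. cis (- 2 * pi * (real_vec s \<bullet> u))"
  have F_measurable: "?F t' \<in> borel_measurable ?S" for t'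
    by (rule measurable_compose[OF digit_expansion_measurable])
      (intro borel_measurable_continuous_onI continuous_intros)
  have AE_digits: "AE \<omega> in ?S. \<forall>j. \<omega> j \<in> digits b"
    unfolding AE_all_countable
    by (intro allI AE_PiM_component) (use sub in \<open>auto intro: prob_space_measure_pmf simp: AE_measure_pmf_iff\<close>)
  have first_digit: "(\<integral>\<omega>. ?F t (case_nat s \<omega>) \<partial>?S) = ?c s * fourier_transform \<mu> u"
    if s: "s \<in> digits b" for s
  proof -
    have pointwise: "?F t (case_nat s \<omega>) = ?c s * ?F u \<omega>" if "\<forall>j. \<omega> j \<in> digits b" for \<omega>
    proof -
      have "t \<bullet> digit_expansion b (case_nat s \<omega>) = u \<bullet> real_vec s + u \<bullet> digit_expansion b \<omega>"
        using that by (simp add: digit_expansion_case_nat[OF b s] u_def inner_add_right add_divide_distrib)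
      then have "t \<bullet> digit_expansion b (case_nat s \<omega>) = real_vec s \<bullet> u + u \<bullet> digit_expansion b \<omega>"
        by (simp add: inner_commute)
      then show ?thesis by (simp add: cis_mult distrib_left)
    qed
    have "(\<integral>\<omega>. ?F t (case_nat s \<omega>) \<partial>?S) = (\<integral>\<omega>. ?c s * ?F u \<omega> \<partial>?S)"
    proof (rule integral_cong_AE)
      show "(\<lambda>\<omega>. ?F t (case_nat s \<omega>)) \<in> borel_measurable ?S"
        by (rule measurable_compose[OF _ F_measurable]) measurable
      show "(\<lambda>\<omega>. ?c s * ?F u \<omega>) \<in> borel_measurable ?S"
        using F_measurable[of u] by measurable
      show "AE \<omega> in ?S. ?F t (case_nat s \<omega>) = ?c s * ?F u \<omega>"
        using AE_digits by eventually_elim (rule pointwise)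
    qed
    then show ?thesis by (simp add: \<mu>_def fourier_transform_missing_digit_measure)
  qed
  have "fourier_transform \<mu> t = (\<integral>s. \<integral>\<omega>. ?F t (case_nat s \<omega>) \<partial>?S \<partial>?M)"
    unfolding \<mu>_def fourier_transform_missing_digit_measure
    by (rule integral_digit_space_case_nat[OF F_measurable, where B=1]) simp
  also have "\<dots> = (\<integral>s. ?c s * fourier_transform \<mu> u \<partial>?M)"
  proof (rule integral_cong_AE)
    show "AE s in ?M. (\<integral>\<omega>. ?F t (case_nat s \<omega>) \<partial>?S) = ?c s * fourier_transform \<mu> u"
      unfolding AE_measure_pmf_iff using sub first_digit by blast
  qed auto
  also have "\<dots> = (\<Sum>s\<in>digits b. pmf P s *\<^sub>R (?c s * fourier_transform \<mu> u))"
    by (rule integral_measure_pmf[OF finite_digits]) (use sub in auto)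
  also have "\<dots> = (\<Sum>s\<in>digits b. of_real (pmf P s) * ?c s) * fourier_transform \<mu> u"
    by (simp add: sum_distrib_right scaleR_conv_of_real mult.assoc)
  finally show ?thesis .
qed

lemma norm_fourier_transform_le_S_fun:
  fixes P :: "(nat^'n::finite) pmf"
  assumes b: "b \<ge> 2" and sub: "set_pmf P \<subseteq> digits b"
  shows "norm (fourier_transform (missing_digit_measure b P) t) \<le> S_fun b P N ((1 / real b ^ N) *\<^sub>R t)"
proof (induction N arbitrary: t)
  case 0
  show ?case
    using norm_fourier_transform_le_one[OF prob_space_missing_digit_measure] by (simp add: S_fun_def)
next
  case (Suc N)
  let ?\<mu> = "missing_digit_measure b P"
  let ?u = "(1 / real b) *\<^sub>R t"
  have "norm (fourier_transform ?\<mu> t) = g_fun b P ?u * norm (fourier_transform ?\<mu> ?u)"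
    by (subst fourier_transform_missing_digit_measure_self_similar[OF b sub]) (simp add: norm_mult g_fun_eq_norm_conj)
  also have "\<dots> \<le> g_fun b P ?u * S_fun b P N ((1 / real b ^ N) *\<^sub>R ?u)"
    by (intro mult_left_mono Suc g_fun_nonneg)
  also have "\<dots> = S_fun b P (Suc N) ((1 / real b ^ Suc N) *\<^sub>R t)"
  proof -
    have "real b ^ N *\<^sub>R ((1 / real b ^ Suc N) *\<^sub>R t) = ?u" using b by simp
    then show ?thesis
      using S_fun_add[of b P N 1 "(1 / real b ^ Suc N) *\<^sub>R t"] by (simp add: S_fun_def mult.commute)
  qed
  finally show ?case .
qed

lemma norm_fourier_coeff_le_S_fun_mod:
  fixes P :: "(nat^'n::finite) pmf" and N :: nat and \<xi> :: "int^'n"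
  assumes b: "b \<ge> 2" and sub: "set_pmf P \<subseteq> digits b"
  defines "D \<equiv> b ^ N"
  shows "norm (fourier_coeff (missing_digit_measure b P) \<xi>)
    \<le> S_fun b P N ((1 / real D) *\<^sub>R real_vec (\<chi> j. nat (\<xi>$j mod int D)))"
proof -
  have D: "D > 0" using b by (simp add: D_def)
  have "(1 / real D) *\<^sub>R (\<chi> i. of_int (\<xi>$i))
      = (1 / real D) *\<^sub>R real_vec (\<chi> j. nat (\<xi>$j mod int D)) + (\<chi> j. of_int (\<xi>$j div int D))"
  proof -
    have "real_of_int (\<xi>$j) = of_int (\<xi>$j mod int D) + real D * of_int (\<xi>$j div int D)" for j
      by (metis div_mult_mod_eq add.commute mult.commute of_int_add of_int_mult of_int_of_nat_eq)
    then show ?thesis using D by (simp add: vec_eq_iff real_vec_def field_simps)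
  qed
  then have "S_fun b P N ((1 / real D) *\<^sub>R (\<chi> i. of_int (\<xi>$i)))
      = S_fun b P N ((1 / real D) *\<^sub>R real_vec (\<chi> j. nat (\<xi>$j mod int D)))"
    by (simp add: S_fun_periodic)
  then show ?thesis
    using norm_fourier_transform_le_S_fun[OF b sub, of "\<chi> i. of_int (\<xi>$i)" N]
    by (simp add: fourier_coeff_eq_fourier_transform D_def)
qed

section \<open>Grid sums of \<open>S\<^sub>L\<close>\<close>

definition grid_sum :: "nat \<Rightarrow> (nat^'n::finite) pmf \<Rightarrow> nat \<Rightarrow> real^'n \<Rightarrow> real" where
  "grid_sum b P L y = (\<Sum>i\<in>digits (b ^ L). S_fun b P L (y + (1 / real b ^ L) *\<^sub>R real_vec i))"

lemma grid_sum_nonneg: "grid_sum b P L y \<ge> 0"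
  by (simp add: grid_sum_def sum_nonneg S_fun_nonneg)

lemma grid_sum_add:
  fixes P :: "(nat^'n::finite) pmf"
  assumes b: "b \<ge> 2"
  shows "grid_sum b P (L + N) y = (\<Sum>a\<in>digits (b ^ N).
    grid_sum b P L (y + (1 / real b ^ (L + N)) *\<^sub>R real_vec a) *
    S_fun b P N (real b ^ L *\<^sub>R y + (1 / real b ^ N) *\<^sub>R real_vec a))"
proof -
  have split_term: "S_fun b P (L + N) (y + (1 / real b ^ (L + N)) *\<^sub>R real_vec (\<chi> j. a$j + b ^ N * c$j))
      = S_fun b P L ((y + (1 / real b ^ (L + N)) *\<^sub>R real_vec a) + (1 / real b ^ L) *\<^sub>R real_vec c)
        * S_fun b P N (real b ^ L *\<^sub>R y + (1 / real b ^ N) *\<^sub>R real_vec a)"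
    for a c :: "nat^'n"
  proof -
    let ?x = "y + (1 / real b ^ (L + N)) *\<^sub>R real_vec (\<chi> j. a$j + b ^ N * c$j)"
    have x: "?x = (y + (1 / real b ^ (L + N)) *\<^sub>R real_vec a) + (1 / real b ^ L) *\<^sub>R real_vec c"
      and bx: "real b ^ L *\<^sub>R ?x = (real b ^ L *\<^sub>R y + (1 / real b ^ N) *\<^sub>R real_vec a) + real_vec c"
      using b by (simp_all add: vec_eq_iff real_vec_def power_add field_simps)
    have "S_fun b P (L + N) ?x = S_fun b P L ?x * S_fun b P N (real b ^ L *\<^sub>R ?x)"
      by (rule S_fun_add)
    also have "S_fun b P N (real b ^ L *\<^sub>R ?x) = S_fun b P N (real b ^ L *\<^sub>R y + (1 / real b ^ N) *\<^sub>R real_vec a)"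
      unfolding bx by (rule S_fun_periodic) (simp add: real_vec_def)
    finally show ?thesis unfolding x .
  qed
  have "grid_sum b P (L + N) y = (\<Sum>a\<in>digits (b ^ N). \<Sum>c\<in>digits (b ^ L).
      S_fun b P (L + N) (y + (1 / real b ^ (L + N)) *\<^sub>R real_vec (\<chi> j. a$j + b ^ N * c$j)))"
    unfolding grid_sum_def power_add mult.commute[of "b ^ L"]
    using b by (subst sum_digits_mult) (simp_all add: mult.commute)
  also have "\<dots> = (\<Sum>a\<in>digits (b ^ N). \<Sum>c\<in>digits (b ^ L).
      S_fun b P L ((y + (1 / real b ^ (L + N)) *\<^sub>R real_vec a) + (1 / real b ^ L) *\<^sub>R real_vec c)
        * S_fun b P N (real b ^ L *\<^sub>R y + (1 / real b ^ N) *\<^sub>R real_vec a))"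
    by (simp only: split_term)
  finally show ?thesis by (simp add: grid_sum_def sum_distrib_right)
qed

lemma grid_sum_mult_le_power:
  fixes P :: "(nat^'n::finite) pmf"
  assumes b: "b \<ge> 2" and K: "\<And>y. grid_sum b P L y \<le> K"
  shows "grid_sum b P (L * M) y \<le> K ^ M"
proof (induction M arbitrary: y)
  case 0
  have "digits 1 = {0 :: nat^'n}" by (auto simp: digits_def vec_eq_iff)
  then show ?case by (simp add: grid_sum_def S_fun_def)
next
  case (Suc M)
  have K0: "K \<ge> 0" using K[of 0] grid_sum_nonneg[of b P L 0] by linarith
  let ?T = "\<lambda>a. S_fun b P (L * M) (real b ^ L *\<^sub>R y + (1 / real b ^ (L * M)) *\<^sub>R real_vec a)"
  have "grid_sum b P (L * Suc M) y = (\<Sum>a\<in>digits (b ^ (L * M)).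
      grid_sum b P L (y + (1 / real b ^ (L * Suc M)) *\<^sub>R real_vec a) * ?T a)"
    using grid_sum_add[OF b, where L=L and N="L * M" and y=y] by simp
  also have "\<dots> \<le> (\<Sum>a\<in>digits (b ^ (L * M)). K * ?T a)"
    by (intro sum_mono mult_right_mono K S_fun_nonneg)
  also have "\<dots> = K * grid_sum b P (L * M) (real b ^ L *\<^sub>R y)"
    by (simp add: grid_sum_def sum_distrib_left)
  also have "\<dots> \<le> K * K ^ M"
    by (intro mult_left_mono Suc K0)
  finally show ?case by simp
qed

lemma grid_sum_le_card:
  fixes y :: "real^'n::finite"
  assumes "set_pmf P \<subseteq> digits b"
  shows "grid_sum b P L y \<le> (real b ^ L) ^ CARD('n)"
proof -
  have "grid_sum b P L y \<le> (\<Sum>i\<in>(digits (b ^ L) :: (nat^'n) set). 1::real)"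
    unfolding grid_sum_def by (intro sum_mono S_fun_le_one assms)
  then show ?thesis by (simp add: card_digits power_mult[symmetric] mult.commute)
qed

lemma grid_sum_zero_ge_one:
  assumes b: "b \<ge> 2" and sub: "set_pmf P \<subseteq> digits b"
  shows "grid_sum b P L (0 :: real^'n::finite) \<ge> 1"
proof -
  have "S_fun b P L (0 + (1 / real b ^ L) *\<^sub>R real_vec (0 :: nat^'n)) \<le> grid_sum b P L 0"
    unfolding grid_sum_def using b
    by (intro member_le_sum) (auto simp: S_fun_nonneg finite_digits zero_in_digits)
  moreover have "real_vec (0 :: nat^'n) = 0" by (simp add: real_vec_def vec_eq_iff)
  ultimately show ?thesis by (simp add: S_fun_zero[OF sub])
qed

lemma sum_fourier_coeff_int_box_le_grid_sum:
  fixes P :: "(nat^'n::finite) pmf"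
  assumes b: "b \<ge> 2" and sub: "set_pmf P \<subseteq> digits b" and Q: "Q < real b ^ N"
  shows "(\<Sum>\<xi>\<in>int_box Q. norm (fourier_coeff (missing_digit_measure b P) \<xi>))
    \<le> 2 ^ CARD('n) * grid_sum b P N 0"
proof -
  have D: "b ^ N > 0" using b by simp
  have "(\<Sum>\<xi>\<in>int_box Q. norm (fourier_coeff (missing_digit_measure b P) \<xi>))
      \<le> (\<Sum>\<xi>\<in>int_box Q. S_fun b P N ((1 / real (b ^ N)) *\<^sub>R real_vec (\<chi> j. nat (\<xi>$j mod int (b ^ N)))))"
    by (intro sum_mono norm_fourier_coeff_le_S_fun_mod[OF b sub])
  also have "\<dots> \<le> 2 ^ CARD('n) * (\<Sum>a\<in>digits (b ^ N). S_fun b P N ((1 / real (b ^ N)) *\<^sub>R real_vec a))"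
  proof (rule sum_mod_le_two_power_sum_digits[OF D S_fun_nonneg])
    fix \<xi> :: "int^'n" and j assume "\<xi> \<in> int_box Q"
    then have "\<bar>of_int (\<xi>$j)\<bar> \<le> Q" by simp
    then have "\<bar>of_int (\<xi>$j)\<bar> < real (b ^ N)" using Q by simp
    then show "- int (b ^ N) < \<xi>$j \<and> \<xi>$j < int (b ^ N)" by linarith
  qed
  finally show ?thesis by (simp add: grid_sum_def)
qed

section \<open>The \<open>\<ell>\<^sup>1\<close>-dimension bound\<close>

lemma fourier_bound_exponent_le_dim:
  fixes \<nu> :: "(real^'n::finite) measure"
  assumes "prob_space \<nu>"
    and C: "\<And>Q. Q \<ge> 1 \<Longrightarrow> (\<Sum>\<xi>\<in>int_box Q. norm (fourier_coeff \<nu> \<xi>)) \<le> C * Q powr (real CARD('n) - s)"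
  shows "s \<le> real CARD('n)"
proof (rule ccontr)
  assume "\<not> s \<le> real CARD('n)"
  then have e: "s - real CARD('n) > 0" by simp
  text \<open>The zero coefficient alone contributes \<open>1\<close>, while \<open>C Q\<^sup>k\<^sup>-\<^sup>s \<rightarrow> 0\<close>.\<close>
  have one: "1 \<le> C * Q powr (real CARD('n) - s)" if Q: "Q \<ge> 1" for Q :: real
  proof -
    have "(\<chi> i. real_of_int ((0::int^'n)$i)) = 0" by (simp add: vec_eq_iff)
    then have "1 = norm (fourier_coeff \<nu> 0)"
      by (simp add: fourier_coeff_eq_fourier_transform fourier_transform_zero assms(1))
    also have "\<dots> \<le> (\<Sum>\<xi>\<in>int_box Q. norm (fourier_coeff \<nu> \<xi>))"
      by (rule member_le_sum) (use Q in \<open>auto intro: finite_int_box\<close>)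
    finally show ?thesis using C[OF Q] by linarith
  qed
  have C1: "C \<ge> 1" using one[of 1] by simp
  define Q where "Q = (C + 1) powr (1 / (s - real CARD('n)))"
  have "Q \<ge> 1" unfolding Q_def using C1 e by (intro ge_one_powr_ge_zero) auto
  moreover have "(real CARD('n) - s) / (s - real CARD('n)) = -1"
    using e by (simp add: field_simps)
  then have "Q powr (real CARD('n) - s) = (C + 1) powr (-1)"
    by (simp add: Q_def powr_powr)
  moreover have "(C + 1) powr (-1) = 1 / (C + 1)"
    using C1 by (simp add: powr_minus_divide)
  ultimately have "1 \<le> C / (C + 1)" using one by fastforce
  then show False using C1 by (simp add: field_simps)
qed

lemma l1_dim_ge:
  fixes \<nu> :: "(real^'n::finite) measure"
  assumes "prob_space \<nu>" and s: "s \<ge> 0"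
    and C: "\<And>Q. Q \<ge> 1 \<Longrightarrow> (\<Sum>\<xi>\<in>int_box Q. norm (fourier_coeff \<nu> \<xi>)) \<le> C * Q powr (real CARD('n) - s)"
  shows "s \<le> l1_dim \<nu>"
  unfolding l1_dim_def
proof (rule cSup_upper)
  show "s \<in> {s. s \<ge> 0 \<and> (\<exists>C. \<forall>Q::real. Q \<ge> 1 \<longrightarrow>
      (\<Sum>\<xi>\<in>int_box Q. norm (fourier_coeff \<nu> \<xi>)) \<le> C * Q powr (real CARD('n) - s))}"
    using s C by blast
  show "bdd_above {s. s \<ge> 0 \<and> (\<exists>C. \<forall>Q::real. Q \<ge> 1 \<longrightarrow>
      (\<Sum>\<xi>\<in>int_box Q. norm (fourier_coeff \<nu> \<xi>)) \<le> C * Q powr (real CARD('n) - s))}"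
    by (rule bdd_aboveI[where M="real CARD('n)"])
      (use fourier_bound_exponent_le_dim[OF assms(1)] in blast)
qed

lemma neg_ln_div_ln_nonneg:
  fixes \<sigma> \<beta> :: real
  assumes "0 < \<sigma>" "\<sigma> \<le> 1" "1 < \<beta>"
  shows "0 \<le> - ln \<sigma> / ln \<beta>"
proof -
  have "ln \<sigma> \<le> 0" using assms(1,2) by simp
  moreover have "0 < ln \<beta>" using assms(3) by (rule ln_gt_zero)
  ultimately show ?thesis by (simp add: divide_nonpos_pos)
qed

lemma exists_power_bracket:
  fixes \<beta> Q :: real
  assumes "\<beta> > 1" "Q \<ge> 1"
  obtains n where "\<beta> ^ n \<le> Q" "Q < \<beta> ^ Suc n"
proof -
  obtain M where "Q < \<beta> ^ M" using real_arch_pow[OF assms(1)] by blast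
  define m where "m = (LEAST M. Q < \<beta> ^ M)"
  have "Q < \<beta> ^ m" unfolding m_def by (rule LeastI) fact
  moreover have "m \<noteq> 0"
  proof
    assume "m = 0"
    with \<open>Q < \<beta> ^ m\<close> assms(2) show False by simp
  qed
  moreover have "\<not> Q < \<beta> ^ (m - 1)"
    unfolding m_def by (rule not_less_Least) (use \<open>m \<noteq> 0\<close> m_def in auto)
  ultimately show ?thesis using that[of "m - 1"] by simp
qed

text \<open>With \<open>\<beta> = b\<^sup>L\<close> and \<open>\<beta>\<^sup>n \<le> Q < \<beta>\<^sup>n\<^sup>+\<^sup>1\<close>, this turns the grid-sum bound \<open>(\<beta>\<^sup>k \<sigma>)\<^sup>n\<^sup>+\<^sup>1\<close> into \<open>Q\<^sup>k\<^sup>-\<^sup>s\<close>.\<close>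

lemma power_le_powr_of_bracket:
  fixes \<beta> \<sigma> Q :: real
  assumes \<beta>: "\<beta> > 1" and \<sigma>: "0 < \<sigma>" "\<sigma> \<le> 1" and Q: "\<beta> ^ n \<le> Q" "Q < \<beta> ^ Suc n"
  defines "s \<equiv> - ln \<sigma> / ln \<beta>"
  shows "(\<beta> ^ k * \<sigma>) ^ Suc n \<le> \<beta> ^ k * Q powr (real k - s)"
proof -
  have Q0: "Q > 0" using Q(1) \<beta> by (smt (verit) one_le_power)
  have s0: "s \<ge> 0" unfolding s_def using \<sigma> \<beta> by (rule neg_ln_div_ln_nonneg)
  have "\<beta> powr (- s) = \<sigma>" using \<beta> \<sigma> by (simp add: s_def powr_def)
  then have "\<sigma> ^ Suc n = (\<beta> powr (- s)) ^ Suc n" by simp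
  also have "\<dots> = (\<beta> powr real (Suc n)) powr (- s)"
    using \<beta> by (simp only: powr_power[of \<beta>] powr_powr)
  also have "\<dots> = (\<beta> ^ Suc n) powr (- s)"
    using \<beta> by (simp only: powr_realpow)
  also have "\<dots> \<le> Q powr (- s)" using s0 Q Q0 by (intro powr_mono2') auto
  finally have "(\<beta> ^ k * \<sigma>) ^ Suc n \<le> \<beta> ^ k * (\<beta> ^ n) ^ k * Q powr (- s)"
    using \<beta> by (simp add: power_mult_distrib power_mult[symmetric] mult.commute mult.left_commute
      power_add mult_left_mono)
  also have "\<dots> \<le> \<beta> ^ k * Q ^ k * Q powr (- s)"
    using Q \<beta> by (intro mult_right_mono mult_left_mono power_mono) auto
  also have "\<dots> = \<beta> ^ k * Q powr (real k - s)"
    using Q0 by (simp add: powr_diff powr_realpow divide_inverse powr_minus)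
  finally show ?thesis .
qed

definition grid_sup :: "nat \<Rightarrow> (nat^'n::finite) pmf \<Rightarrow> nat \<Rightarrow> real" where
  "grid_sup b P L = (SUP x::real^'n. real b powr (- (real CARD('n) * real L)) * grid_sum b P L x)"

lemma grid_sup_bounds:
  fixes P :: "(nat^'n::finite) pmf"
  assumes b: "b \<ge> 2" and sub: "set_pmf P \<subseteq> digits b"
  shows "0 < grid_sup b P L" "grid_sup b P L \<le> 1"
    and "grid_sum b P L y \<le> (real b ^ L) ^ CARD('n) * grid_sup b P L"
proof -
  define W where "W = real b powr (- (real CARD('n) * real L))"
  have pow: "real b powr (real CARD('n) * real L) = (real b ^ L) ^ CARD('n)"
    using powr_realpow[of "real b" "L * CARD('n)"] b by (simp add: power_mult mult.commute)
  have W: "W * (real b ^ L) ^ CARD('n) = 1"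
    using b by (simp add: W_def powr_minus flip: pow)
  then have W0: "W > 0" using b by (simp add: W_def)
  have le1: "W * grid_sum b P L x \<le> 1" for x
    using mult_left_mono[OF grid_sum_le_card[OF sub, where L=L and y=x] less_imp_le[OF W0]] W by linarith
  then have bdd: "bdd_above (range (\<lambda>x. W * grid_sum b P L x))" by (rule bdd_aboveI2)
  have upper: "W * grid_sum b P L x \<le> grid_sup b P L" for x
    unfolding grid_sup_def W_def[symmetric] by (rule cSUP_upper[OF _ bdd]) simp
  show "grid_sup b P L \<le> 1" unfolding grid_sup_def W_def[symmetric] by (rule cSUP_least) (auto intro: le1)
  show "0 < grid_sup b P L"
    using upper[of 0] W0 grid_sum_zero_ge_one[OF b sub, of L] by (smt (verit) mult_le_cancel_left1)
  have "grid_sum b P L y = (real b ^ L) ^ CARD('n) * (W * grid_sum b P L y)"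
    by (metis W mult.assoc mult.commute mult.left_neutral)
  also have "\<dots> \<le> (real b ^ L) ^ CARD('n) * grid_sup b P L"
    by (intro mult_left_mono upper) simp
  finally show "grid_sum b P L y \<le> (real b ^ L) ^ CARD('n) * grid_sup b P L" .
qed

lemma l1_dim_ge_grid_sup:
  fixes P :: "(nat^'n::finite) pmf"
  assumes b: "b \<ge> 2" and sub: "set_pmf P \<subseteq> digits b" and L: "L \<ge> 1"
  shows "- ln (grid_sup b P L) / ln (real b ^ L) \<le> l1_dim (missing_digit_measure b P)"
proof (rule l1_dim_ge[OF prob_space_missing_digit_measure])
  let ?\<beta> = "real b ^ L" and ?\<sigma> = "grid_sup b P L" and ?k = "CARD('n)"
  have \<beta>: "?\<beta> > 1" using b L by (simp add: one_less_power)
  note \<sigma> = grid_sup_bounds[OF b sub]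
  show "- ln ?\<sigma> / ln ?\<beta> \<ge> 0" using \<sigma>(1,2) \<beta> by (rule neg_ln_div_ln_nonneg)
  fix Q :: real assume "Q \<ge> 1"
  then obtain n where n: "?\<beta> ^ n \<le> Q" "Q < ?\<beta> ^ Suc n" using exists_power_bracket[OF \<beta>] by blast
  have "(\<Sum>\<xi>\<in>int_box Q. norm (fourier_coeff (missing_digit_measure b P) \<xi>))
      \<le> 2 ^ ?k * grid_sum b P (L * Suc n) 0"
    using n(2) by (intro sum_fourier_coeff_int_box_le_grid_sum[OF b sub]) (simp only: power_mult)
  also have "\<dots> \<le> 2 ^ ?k * (?\<beta> ^ ?k * ?\<sigma>) ^ Suc n"
    by (intro mult_left_mono grid_sum_mult_le_power[OF b] \<sigma>(3)) auto
  also have "\<dots> \<le> 2 ^ ?k * (?\<beta> ^ ?k * Q powr (real ?k - - ln ?\<sigma> / ln ?\<beta>))"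
    by (intro mult_left_mono power_le_powr_of_bracket[OF \<beta> \<sigma>(1,2) n]) auto
  finally show "(\<Sum>\<xi>\<in>int_box Q. norm (fourier_coeff (missing_digit_measure b P) \<xi>))
      \<le> (2 ^ ?k * ?\<beta> ^ ?k) * Q powr (real ?k - - ln ?\<sigma> / ln ?\<beta>)"
    by (simp add: mult.assoc)
qed

theorem theoremA2:
  fixes P :: "(nat^'n::finite) pmf" and b L :: nat
  assumes "b \<ge> 2" and "set_pmf P \<subseteq> digits b"
  shows "l1_dim (missing_digit_measure b P) \<ge>
    - ln (SUP x::real^'n. real b powr (- (real CARD('n) * real L)) *
             (\<Sum>i\<in>digits (b ^ L). S_fun b P L (x + (1 / real b ^ L) *\<^sub>R (\<chi> j. real (i$j)))))
    / ln (real b ^ L)"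
proof -
  have "(SUP x::real^'n. real b powr (- (real CARD('n) * real L)) *
             (\<Sum>i\<in>digits (b ^ L). S_fun b P L (x + (1 / real b ^ L) *\<^sub>R (\<chi> j. real (i$j)))))
      = grid_sup b P L"
    by (simp add: grid_sup_def grid_sum_def real_vec_def)
  moreover have "- ln (grid_sup b P L) / ln (real b ^ L) \<le> l1_dim (missing_digit_measure b P)"
  proof (cases "L = 0")
    case True
    text \<open>Here the right-hand side is \<open>x / 0 = 0\<close>; nonnegativity of the dimension comes from \<open>L = 1\<close>.\<close>
    have "0 \<le> - ln (grid_sup b P 1) / ln (real b)"
      using grid_sup_bounds(1,2)[OF assms] assms(1) by (intro neg_ln_div_ln_nonneg) auto
    also have "\<dots> \<le> l1_dim (missing_digit_measure b P)"
      using l1_dim_ge_grid_sup[OF assms, of 1] by simp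
    finally show ?thesis using True by simp
  qed (use l1_dim_ge_grid_sup[OF assms] in simp)
  ultimately show ?thesis by simp
qed

end
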